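(* Let $\mathbf{X}_z\in\{0,1\}^{M_z\times N}$, $\mathbf{X}_p\in\{0,1\}^{M_p\times N}$, $1\le L\le N$, $0<\epsilon_0<1$, and let $(\underline{z},\underline{\mu},\underline{\lambda}_1,\underline{\lambda}_2,\nu)$ satisfy the KKT conditions described in the context. If $\underline{\lambda}_2(i)>0$ for some $i\in[N]$, then $\underline{\mu}^T\mathbf{X}_p(:,i)=0$.
   Context: $\underline{1}_n,\underline{0}_n$ denote all-ones/all-zeros vectors, $\preccurlyeq$ componentwise inequality, $\circ$ componentwise product, $\mathbf{X}_p(:,i)$ the $i$-th column of $\mathbf{X}_p$. Consider the linear program: minimize $\underline{1}_{M_z}^T\mathbf{X}_z\underline{z}$ over $\underline{z}\in\mathbb{R}^N$ subject to $\mathbf{X}_p\underline{z}\succcurlyeq(1-\epsilon_0)\underline{1}_{M_p}$, $\underline{0}_N\preccurlyeq\underline{z}\preccurlyeq\underline{1}_N$, $\underline{1}_N^T\underline{z}\ge N-L$. With dual variables $\underline{\mu}\in\mathbb{R}^{M_p}$, $\underline{\lambda}_1,\underline{\lambda}_2\in\mathbb{R}^N$, $\nu\in\mathbb{R}$, its KKT conditions are: $\underline{1}_{M_z}^T\mathbf{X}_z-\underline{\mu}^T\mathbf{X}_p-\underline{\lambda}_1^T+\underline{\lambda}_2^T-\nu\underline{1}_N^T=\underline{0}_N^T$; $\underline{\mu}\circ(\mathbf{X}_p\underline{z}-(1-\epsilon_0)\underline{1}_{M_p})=\underline{0}_{M_p}$, $\underline{\lambda}_1\circ\underline{z}=\underline{0}_N$,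 $\underline{\lambda}_2\circ(\underline{z}-\underline{1}_N)=\underline{0}_N$, $\nu(\underline{1}_N^T\underline{z}-(N-L))=0$; $\underline{0}_N\preccurlyeq\underline{z}\preccurlyeq\underline{1}_N$, $\underline{1}_N^T\underline{z}\ge N-L$, $\underline{\mu}\succcurlyeq\underline{0}_{M_p}$, $\underline{\lambda}_1\succcurlyeq\underline{0}_N$, $\underline{\lambda}_2\succcurlyeq\underline{0}_N$, $\nu\ge0$. *)

theory Defs
  imports "HOL-Analysis.Analysis"
begin

end

theory Submission
  imports Defs
begin

text \<open>The multiplier \<open>\<lambda>\<^sub>2(i) > 0\<close> forces \<open>z(i) = 1\<close>. Every constraint row \<open>k\<close> with
  \<open>X\<^sub>p(k,i) = 1\<close> then has \<open>(X\<^sub>p z)(k) \<ge> z(i) = 1 > 1 - \<epsilon>\<^sub>0\<close>, so it is slack and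
  complementary slackness gives \<open>\<mu>(k) = 0\<close>; rows with \<open>X\<^sub>p(k,i) = 0\<close> do not contribute
  to \<open>\<mu>\<^sup>T X\<^sub>p(:,i)\<close> at all.\<close>

lemma matrix_vector_mult_component_ge_term:
  fixes A :: "real^'n^'m" and x :: "real^'n"
  assumes "\<And>j. 0 \<le> A $ k $ j" and "0 \<le> x"
  shows "A $ k $ i * x $ i \<le> (A *v x) $ k"
proof -
  have "\<And>j. 0 \<le> A $ k $ j * x $ j"
    using assms by (simp add: less_eq_vec_def)
  then have "A $ k $ i * x $ i \<le> (\<Sum>j\<in>UNIV. A $ k $ j * x $ j)"
    by (intro member_le_sum) auto
  then show ?thesis
    by (simp add: matrix_vector_mult_def)
qed

lemma vector_matrix_mult_component_eq_0:
  fixes A :: "real^'n^'m" and y :: "real^'m"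
  assumes "\<And>k. A $ k $ i \<noteq> 0 \<Longrightarrow> y $ k = 0"
  shows "(y v* A) $ i = 0"
proof -
  have "y $ k * A $ k $ i = 0" for k
    using assms by (cases "A $ k $ i = 0") auto
  then show ?thesis
    unfolding vector_matrix_mult_def by (simp add: sum.neutral)
qed

theorem proposition5:
  fixes Xz :: "real^'n^'mz" and Xp :: "real^'n^'mp"
    and L :: nat and eps0 :: real
    and z :: "real^'n" and mu :: "real^'mp" and lam1 lam2 :: "real^'n" and nu :: real
    and i :: 'n
  assumes Xz01: "\<forall>j k. Xz $ j $ k \<in> {0, 1}"
    and Xp01: "\<forall>j k. Xp $ j $ k \<in> {0, 1}"
    and L_ge: "1 \<le> L" and L_le: "L \<le> CARD('n)"
    and eps_pos: "0 < eps0" and eps_lt: "eps0 < 1"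
    and stat: "(vec 1 v* Xz) - (mu v* Xp) - lam1 + lam2 - nu *\<^sub>R vec 1 = 0"
    and cs_mu: "\<forall>k. mu $ k * ((Xp *v z) $ k - (1 - eps0)) = 0"
    and cs_l1: "\<forall>k. lam1 $ k * z $ k = 0"
    and cs_l2: "\<forall>k. lam2 $ k * (z $ k - 1) = 0"
    and cs_nu: "nu * (sum (\<lambda>k. z $ k) UNIV - (real CARD('n) - real L)) = 0"
    and z_ge: "0 \<le> z" and z_le: "z \<le> vec 1"
    and z_sum: "sum (\<lambda>k. z $ k) UNIV \<ge> real CARD('n) - real L"
    and pfeas: "Xp *v z \<ge> vec (1 - eps0)"
    and mu_ge: "0 \<le> mu" and l1_ge: "0 \<le> lam1" and l2_ge: "0 \<le> lam2" and nu_ge: "0 \<le> nu"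
    and l2_pos: "lam2 $ i > 0"
  shows "(mu v* Xp) $ i = 0"
proof (rule vector_matrix_mult_component_eq_0)
  fix k
  assume "Xp $ k $ i \<noteq> 0"
  then have Xp_ki: "Xp $ k $ i = 1"
    using Xp01 by auto
  have z_i: "z $ i = 1"
    using cs_l2 l2_pos by (metis eq_iff_diff_eq_0 less_irrefl mult_eq_0_iff)
  have "\<And>j. 0 \<le> Xp $ k $ j"
    using Xp01 by (metis insertE singletonD order_refl zero_le_one)
  then have "1 \<le> (Xp *v z) $ k"
    using matrix_vector_mult_component_ge_term[of Xp k z i] z_ge Xp_ki z_i by simp
  then have "(Xp *v z) $ k - (1 - eps0) \<noteq> 0"
    using eps_pos by linarith
  then show "mu $ k = 0"
    using cs_mu by auto
qed

end
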